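(* For integers $r,k\ge0$ and real $\alpha$ with $\alpha>k>r$, $$\sum_{n=1}^\infty\frac{H_{n+\alpha}^{(2)}}{(n+r)(n+k)}=\frac1{k-r}\Bigg\{(r-\alpha)\sum_{j=1}^r\frac{H_{\alpha+j-r}^{(2)}}{j(\alpha+j-r)}-(k-\alpha)\sum_{j=1}^k\frac{H_{\alpha+j-k}^{(2)}}{j(\alpha+j-k)}-\sum_{j=1}^{k-r}\frac{H_{\alpha+j-k}}{(\alpha+j-k)^2}$$ $$+2H_{\alpha-r}^{(3)}+H_{\alpha-k}\zeta(2)+2H_{\alpha-r}H_{\alpha-r}^{(2)}-2H_{\alpha-k}^{(3)}-H_{\alpha-r}\zeta(2)-2H_{\alpha-k}H_{\alpha-k}^{(2)}\Bigg\}.$$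
   Context: Shifted harmonic numbers: for a real $\alpha$ that is not a negative integer, $H_\alpha := \sum_{k=1}^\infty\left(\frac1k-\frac1{k+\alpha}\right)$ and, for integers $m\ge 2$, $H_\alpha^{(m)} := \sum_{k=1}^\infty\left(\frac1{k^m}-\frac1{(k+\alpha)^m}\right)=\zeta(m)-\zeta(m,\alpha+1)$, where $\zeta$ is the Riemann zeta function and $\zeta(s,\alpha+1)=\sum_{n=1}^\infty (n+\alpha)^{-s}$ is the Hurwitz zeta function. Empty sums are $0$. *)

theory Defs
  imports "HOL-Analysis.Analysis"
begin

text \<open>Shifted harmonic numbers, as in the paper (alpha not a negative integer):
  H_alpha = sum_{k>=1} (1/k - 1/(k+alpha)),
  H_alpha^(m) = sum_{k>=1} (1/k^m - 1/(k+alpha)^m).\<close>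

definition shifted_harm :: "real \<Rightarrow> real" where
  "shifted_harm a = (\<Sum>k. 1 / real (Suc k) - 1 / (real (Suc k) + a))"

definition shifted_harm_pow :: "nat \<Rightarrow> real \<Rightarrow> real" where
  "shifted_harm_pow m a = (\<Sum>k. 1 / real (Suc k) ^ m - 1 / (real (Suc k) + a) ^ m)"

definition zeta_real :: "nat \<Rightarrow> real" where
  "zeta_real m = (\<Sum>k. 1 / real (Suc k) ^ m)"

end

theory Submission
  imports Defs
begin

text \<open>
  By partial fractions the series equals (zeta(2) (H_k - H_r) + T(alpha, r) - T(alpha, k)) / (k - r),
  where T(a, s) = tail_sum a s = sum_{n >= 1} (H^(2)_{n+a} - zeta(2)) / (n + s) converges because
  H^(2)_x - zeta(2) = O(1/x). Shifting the summation index gives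
  T(a, s + 1) = T(a - 1, s) - (H^(2)_a - zeta(2)) / (s + 1), while
  T(a, s) - T(a - 1, s) = sum_n 1 / ((n + a)^2 (n + s)) is evaluated by partial fractions in terms
  of H_a, H_s and H^(2)_a. Together these show that T(alpha, s) - zeta(2) H_s - B(alpha - s, s)
  does not depend on s < alpha, for an explicit finite expression B; comparing s = r with s = k
  gives the theorem.
\<close>

lemma summable_inverse_Suc_power:
  assumes "m \<ge> 2"
  shows "summable (\<lambda>k. 1 / real (Suc k) ^ m)"
proof -
  have "summable (\<lambda>n. inverse (real n ^ m))"
    using inverse_power_summable[OF assms] by simp
  then show ?thesis
    by (subst (asm) summable_Suc_iff [symmetric]) (simp add: field_simps)
qed

lemma LIMSEQ_inverse_add_power_0:
  assumes "m \<ge> 1" "c > 0"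
  shows "(\<lambda>k. 1 / (real k + c) ^ m) \<longlonglongrightarrow> 0"
proof -
  have "filterlim (\<lambda>k. real k + c) at_top sequentially"
    using filterlim_tendsto_add_at_top[OF tendsto_const filterlim_real_sequentially, of c]
    by (simp add: add.commute)
  then have "(\<lambda>k. inverse (real k + c) ^ m) \<longlonglongrightarrow> 0 ^ m"
    by (intro tendsto_power tendsto_inverse_0_at_top)
  moreover have "(0::real) ^ m = 0"
    using assms by simp
  ultimately show ?thesis
    by (simp add: power_one_over inverse_eq_divide)
qed

lemma zeta_real_sums: "m \<ge> 2 \<Longrightarrow> (\<lambda>k. 1 / real (Suc k) ^ m) sums zeta_real m"
  unfolding zeta_real_def by (intro summable_sums summable_inverse_Suc_power)

lemma summable_shifted_harm_pow_terms:
  assumes "a \<ge> 0" "m \<ge> 1"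
  shows "summable (\<lambda>k. 1 / real (Suc k) ^ m - 1 / (real (Suc k) + a) ^ m)"
proof (cases "m = 1")
  case True
  have "norm (1 / real (Suc k) - 1 / (real (Suc k) + a)) \<le> a * (1 / real (Suc k) ^ 2)" for k
  proof -
    have "1 / real (Suc k) - 1 / (real (Suc k) + a) = a / (real (Suc k) * (real (Suc k) + a))"
      using assms by (simp add: field_simps)
    also have "\<dots> \<le> a / (real (Suc k) * real (Suc k))"
      using assms by (intro divide_left_mono mult_left_mono) auto
    finally have "1 / real (Suc k) - 1 / (real (Suc k) + a) \<le> a * (1 / real (Suc k) ^ 2)"
      by (simp add: power2_eq_square)
    moreover have "1 / real (Suc k) - 1 / (real (Suc k) + a) \<ge> 0"
      using assms by (simp add: field_simps)
    ultimately show ?thesis by simp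
  qed
  moreover have "summable (\<lambda>k. a * (1 / real (Suc k) ^ 2))"
    by (intro summable_mult summable_inverse_Suc_power) simp
  ultimately show ?thesis
    using True by (rule_tac summable_comparison_test'[where N = 0]) auto
next
  case False
  with assms have "m \<ge> 2" by simp
  moreover have "summable (\<lambda>k. 1 / (real (Suc k) + a) ^ m)"
    using assms summable_inverse_Suc_power[OF \<open>m \<ge> 2\<close>]
    by (rule_tac summable_comparison_test'[where N = 0]) (auto simp: frac_le power_mono)
  ultimately show ?thesis
    by (intro summable_diff summable_inverse_Suc_power)
qed

lemma shifted_harm_pow_sums:
  "a \<ge> 0 \<Longrightarrow> m \<ge> 1 \<Longrightarrow>
    (\<lambda>k. 1 / real (Suc k) ^ m - 1 / (real (Suc k) + a) ^ m) sums shifted_harm_pow m a"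
  unfolding shifted_harm_pow_def by (intro summable_sums summable_shifted_harm_pow_terms)

lemma shifted_harm_sums:
  "a \<ge> 0 \<Longrightarrow> (\<lambda>k. 1 / real (Suc k) - 1 / (real (Suc k) + a)) sums shifted_harm a"
  using shifted_harm_pow_sums[of a 1] by (simp add: shifted_harm_def shifted_harm_pow_def)

lemma shifted_harm_0 [simp]: "shifted_harm 0 = 0"
  by (simp add: shifted_harm_def)

lemma shifted_harm_pow_plus_1:
  assumes "a \<ge> 0" "m \<ge> 1"
  shows "shifted_harm_pow m (a + 1) = shifted_harm_pow m a + 1 / (a + 1) ^ m"
proof -
  define g where "g k = 1 / (real k + (a + 1)) ^ m" for k
  have "g \<longlonglongrightarrow> 0"
    unfolding g_def using assms by (intro LIMSEQ_inverse_add_power_0) auto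
  then have "(\<lambda>k. g k - g (Suc k)) sums g 0"
    using telescope_sums' by fastforce
  then have "(\<lambda>k. (1 / real (Suc k) ^ m - 1 / (real (Suc k) + a) ^ m) + (g k - g (Suc k)))
      sums (shifted_harm_pow m a + g 0)"
    using assms by (intro sums_add shifted_harm_pow_sums)
  moreover have "(\<lambda>k. 1 / real (Suc k) ^ m - 1 / (real (Suc k) + (a + 1)) ^ m)
      sums shifted_harm_pow m (a + 1)"
    using assms by (intro shifted_harm_pow_sums) auto
  ultimately show ?thesis
    by (simp add: sums_unique2 g_def algebra_simps)
qed

lemma shifted_harm_plus_1: "a \<ge> 0 \<Longrightarrow> shifted_harm (a + 1) = shifted_harm a + 1 / (a + 1)"
  using shifted_harm_pow_plus_1[of a 1] by (simp add: shifted_harm_def shifted_harm_pow_def)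

lemma inverse_shifted_power_sums:
  "a \<ge> 0 \<Longrightarrow> m \<ge> 2 \<Longrightarrow>
    (\<lambda>k. 1 / (real (Suc k) + a) ^ m) sums (zeta_real m - shifted_harm_pow m a)"
  using sums_diff[OF zeta_real_sums shifted_harm_pow_sums, of m a m] by simp

lemma shifted_harm_diff_sums:
  "a \<ge> 0 \<Longrightarrow> b \<ge> 0 \<Longrightarrow>
    (\<lambda>k. 1 / (real (Suc k) + b) - 1 / (real (Suc k) + a)) sums (shifted_harm a - shifted_harm b)"
  using sums_diff[OF shifted_harm_sums shifted_harm_sums, of a b] by simp

lemma zeta_real_2_minus_shifted_harm_pow_bounds:
  assumes "y > 0"
  shows "0 \<le> zeta_real 2 - shifted_harm_pow 2 y" "zeta_real 2 - shifted_harm_pow 2 y \<le> 1 / y"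
proof -
  have tail: "(\<lambda>k. 1 / (real (Suc k) + y) ^ 2) sums (zeta_real 2 - shifted_harm_pow 2 y)"
    using assms by (intro inverse_shifted_power_sums) auto
  then show "0 \<le> zeta_real 2 - shifted_harm_pow 2 y"
    using sums_le[OF _ sums_zero tail] by simp
  define g where "g k = 1 / (real k + y)" for k
  have "g \<longlonglongrightarrow> 0"
    unfolding g_def using LIMSEQ_inverse_add_power_0[of 1 y] assms by simp
  then have "(\<lambda>k. g k - g (Suc k)) sums g 0"
    using telescope_sums' by fastforce
  moreover have "1 / (real (Suc k) + y) ^ 2 \<le> g k - g (Suc k)" for k
  proof -
    have "g k - g (Suc k) = 1 / ((real k + y) * (real k + 1 + y))"
      unfolding g_def using assms by (simp add: field_simps)
    moreover have "(real k + y) * (real k + 1 + y) \<le> (real k + 1 + y) ^ 2"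
      using assms by (simp add: power2_eq_square mult_right_mono)
    ultimately show ?thesis
      using assms by (simp add: frac_le ac_simps)
  qed
  ultimately show "zeta_real 2 - shifted_harm_pow 2 y \<le> 1 / y"
    using sums_le[OF _ tail] by (fastforce simp: g_def)
qed

definition tail_sum :: "real \<Rightarrow> nat \<Rightarrow> real" where
  "tail_sum a s =
     (\<Sum>n. (shifted_harm_pow 2 (real (Suc n) + a) - zeta_real 2) / (real (Suc n) + real s))"

lemma summable_tail_sum_terms:
  assumes "a \<ge> 0"
  shows "summable (\<lambda>n. (shifted_harm_pow 2 (real (Suc n) + a) - zeta_real 2) / (real (Suc n) + real s))"
proof (rule summable_comparison_test'[where N = 0, OF summable_inverse_Suc_power[of 2]])
  fix n :: nat
  have pos: "real (Suc n) + a > 0"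
    using assms by simp
  note bounds = zeta_real_2_minus_shifted_harm_pow_bounds[OF pos]
  have "zeta_real 2 - shifted_harm_pow 2 (real (Suc n) + a) \<le> 1 / real (Suc n)"
    using bounds(2) assms frac_le[of 1 1 "real (Suc n)" "real (Suc n) + a"] by fastforce
  then have "(zeta_real 2 - shifted_harm_pow 2 (real (Suc n) + a)) / (real (Suc n) + real s)
      \<le> (1 / real (Suc n)) / real (Suc n)"
    using bounds(1) by (intro frac_le) auto
  with bounds(1) show "norm ((shifted_harm_pow 2 (real (Suc n) + a) - zeta_real 2) / (real (Suc n) + real s))
      \<le> 1 / real (Suc n) ^ 2"
    by (simp add: abs_divide abs_of_nonpos power2_eq_square)
qed simp

lemma tail_sum_sums:
  "a \<ge> 0 \<Longrightarrow> (\<lambda>n. (shifted_harm_pow 2 (real (Suc n) + a) - zeta_real 2) / (real (Suc n) + real s))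
     sums tail_sum a s"
  unfolding tail_sum_def by (intro summable_sums summable_tail_sum_terms)

lemma tail_sum_Suc:
  assumes "a \<ge> 1"
  shows "tail_sum a (Suc s) = tail_sum (a - 1) s - (shifted_harm_pow 2 a - zeta_real 2) / (real s + 1)"
proof -
  have summable: "summable (\<lambda>n. (shifted_harm_pow 2 (real (Suc n) + (a - 1)) - zeta_real 2) / (real (Suc n) + real s))"
    using assms by (intro summable_tail_sum_terms) simp
  have "tail_sum a (Suc s) =
      (\<Sum>n. (\<lambda>n. (shifted_harm_pow 2 (real (Suc n) + (a - 1)) - zeta_real 2) / (real (Suc n) + real s)) (Suc n))"
    unfolding tail_sum_def by (rule suminf_cong) (simp add: algebra_simps)
  also have "\<dots> = tail_sum (a - 1) s - (shifted_harm_pow 2 a - zeta_real 2) / (real s + 1)"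
    unfolding tail_sum_def by (subst suminf_split_head[OF summable]) (simp add: add.commute)
  finally show ?thesis .
qed

lemma inverse_square_times_inverse_sums:
  assumes "0 \<le> b" "b < a"
  shows "(\<lambda>n. 1 / ((real (Suc n) + a) ^ 2 * (real (Suc n) + b))) sums
     ((shifted_harm a - shifted_harm b) / (a - b) ^ 2 - (zeta_real 2 - shifted_harm_pow 2 a) / (a - b))"
proof -
  have "(\<lambda>n. (1 / (real (Suc n) + b) - 1 / (real (Suc n) + a)) / (a - b) ^ 2
      - 1 / (real (Suc n) + a) ^ 2 / (a - b)) sums
     ((shifted_harm a - shifted_harm b) / (a - b) ^ 2 - (zeta_real 2 - shifted_harm_pow 2 a) / (a - b))"
    using assms by (intro sums_diff sums_divide shifted_harm_diff_sums inverse_shifted_power_sums) auto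
  moreover have "(1 / (x + b) - 1 / (x + a)) / (a - b) ^ 2 - 1 / (x + a) ^ 2 / (a - b)
      = 1 / ((x + a) ^ 2 * (x + b))" if "x > 0" for x
  proof -
    have "x + b \<noteq> 0" "x + a \<noteq> 0" "a \<noteq> b"
      using that assms by auto
    then show ?thesis
      by (simp add: divide_simps) (simp add: algebra_simps power2_eq_square)
  qed
  ultimately show ?thesis
    by simp
qed

lemma tail_sum_arg_diff:
  assumes "a \<ge> 1" "real s < a"
  shows "tail_sum a s - tail_sum (a - 1) s =
    (shifted_harm a - shifted_harm (real s)) / (a - real s) ^ 2
      - (zeta_real 2 - shifted_harm_pow 2 a) / (a - real s)"
proof (rule sums_unique2)
  have "(\<lambda>n. (shifted_harm_pow 2 (real (Suc n) + a) - zeta_real 2) / (real (Suc n) + real s)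
      - (shifted_harm_pow 2 (real (Suc n) + (a - 1)) - zeta_real 2) / (real (Suc n) + real s))
      sums (tail_sum a s - tail_sum (a - 1) s)"
    using assms by (intro sums_diff tail_sum_sums) auto
  moreover have "shifted_harm_pow 2 (real (Suc n) + a) =
      shifted_harm_pow 2 (real (Suc n) + (a - 1)) + 1 / (real (Suc n) + a) ^ 2" for n
    using assms shifted_harm_pow_plus_1[of "real (Suc n) + (a - 1)" 2] by (simp add: add_ac)
  ultimately show "(\<lambda>n. 1 / ((real (Suc n) + a) ^ 2 * (real (Suc n) + real s)))
      sums (tail_sum a s - tail_sum (a - 1) s)"
    by (simp add: diff_divide_distrib [symmetric])
  show "(\<lambda>n. 1 / ((real (Suc n) + a) ^ 2 * (real (Suc n) + real s))) sums
      ((shifted_harm a - shifted_harm (real s)) / (a - real s) ^ 2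
        - (zeta_real 2 - shifted_harm_pow 2 a) / (a - real s))"
    using assms by (intro inverse_square_times_inverse_sums) auto
qed

lemma sum_from_1_split:
  fixes f :: "nat \<Rightarrow> 'a::comm_monoid_add"
  assumes "r \<le> k"
  shows "(\<Sum>j=1..k. f j) = (\<Sum>j=1..k - r. f j) + (\<Sum>j=1..r. f (j + (k - r)))"
proof -
  have "(\<Sum>j=1..k. f j) = (\<Sum>j=1..(k - r) + r. f j)"
    using assms by simp
  also have "\<dots> = (\<Sum>j=1..k - r. f j) + (\<Sum>j=(k - r) + 1..(k - r) + r. f j)"
    by (rule sum.ub_add_nat) simp
  also have "(\<Sum>j=(k - r) + 1..(k - r) + r. f j) = (\<Sum>j=1..r. f (j + (k - r)))"
    using sum.shift_bounds_cl_nat_ivl[of f 1 "k - r" r] by (simp add: add.commute)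
  finally show ?thesis .
qed

text \<open>This is B(z, s) above: the right-hand side of the theorem is
  (B(alpha - r, r) - B(alpha - k, k)) / (k - r).\<close>

definition tail_sum_closed_form :: "real \<Rightarrow> nat \<Rightarrow> real" where
  "tail_sum_closed_form z s =
     2 * shifted_harm_pow 3 z + 2 * shifted_harm z * shifted_harm_pow 2 z - zeta_real 2 * shifted_harm z
     - z * (\<Sum>j=1..s. shifted_harm_pow 2 (z + real j) / (real j * (z + real j)))
     + (\<Sum>j=1..s. shifted_harm (z + real j) / (z + real j) ^ 2)"

lemma tail_sum_closed_form_shift:
  assumes "y > 1"
  shows "tail_sum_closed_form y s - tail_sum_closed_form (y - 1) (Suc s) =
    shifted_harm_pow 2 (y + real s) / (real s + 1)
    + (shifted_harm (y + real s) - shifted_harm (real s)) / y ^ 2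
    + (shifted_harm_pow 2 (y + real s) - zeta_real 2) / y"
proof (induction s)
  case 0
  have down: "shifted_harm (y - 1) = shifted_harm y - 1 / y"
    "shifted_harm_pow 2 (y - 1) = shifted_harm_pow 2 y - 1 / y ^ 2"
    "shifted_harm_pow 3 (y - 1) = shifted_harm_pow 3 y - 1 / y ^ 3"
    using assms shifted_harm_plus_1[of "y - 1"] shifted_harm_pow_plus_1[of "y - 1"] by simp_all
  have "y \<noteq> 0"
    using assms by simp
  then show ?case
    by (simp add: tail_sum_closed_form_def down field_simps power2_eq_square power3_eq_cube)
next
  case (Suc s)
  define t where "t = real s + 1"
  have nonzero: "y \<noteq> 0" "t \<noteq> 0" "t + 1 \<noteq> 0" "y + t \<noteq> 0"
    using assms by (auto simp: t_def)
  have rec: "shifted_harm_pow 2 (y + real s) = shifted_harm_pow 2 (y + t) - 1 / (y + t) ^ 2"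
    "shifted_harm (y + real s) = shifted_harm (y + t) - 1 / (y + t)"
    "shifted_harm (real (Suc s)) = shifted_harm (real s) + 1 / t"
    using assms shifted_harm_plus_1[of "y + real s"] shifted_harm_pow_plus_1[of "y + real s" 2]
      shifted_harm_plus_1[of "real s"] by (simp_all add: t_def add_ac)
  have step_y: "tail_sum_closed_form y (Suc s) =
      tail_sum_closed_form y s - y * (shifted_harm_pow 2 (y + t) / (t * (y + t)))
        + shifted_harm (y + t) / (y + t) ^ 2"
    by (simp add: tail_sum_closed_form_def t_def algebra_simps)
  have step_x: "tail_sum_closed_form (y - 1) (Suc (Suc s)) =
      tail_sum_closed_form (y - 1) (Suc s) - (y - 1) * (shifted_harm_pow 2 (y + t) / ((t + 1) * (y + t)))
        + shifted_harm (y + t) / (y + t) ^ 2"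
    by (simp add: tail_sum_closed_form_def t_def algebra_simps)
  have "tail_sum_closed_form y (Suc s) - tail_sum_closed_form (y - 1) (Suc (Suc s)) =
      (tail_sum_closed_form y s - tail_sum_closed_form (y - 1) (Suc s))
        - y * (shifted_harm_pow 2 (y + t) / (t * (y + t)))
        + (y - 1) * (shifted_harm_pow 2 (y + t) / ((t + 1) * (y + t)))"
    unfolding step_y step_x by simp
  also have "\<dots> = shifted_harm_pow 2 (y + t) / (t + 1)
      + (shifted_harm (y + t) - shifted_harm (real (Suc s))) / y ^ 2
      + (shifted_harm_pow 2 (y + t) - zeta_real 2) / y"
    unfolding Suc.IH rec t_def [symmetric] using nonzero
    by (simp add: divide_simps) (simp add: algebra_simps power2_eq_square)
  finally show ?case
    by (simp add: t_def add_ac)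
qed

lemma tail_sum_invariant_step:
  assumes "real (Suc s) < \<alpha>"
  shows "tail_sum \<alpha> s - zeta_real 2 * shifted_harm (real s) - tail_sum_closed_form (\<alpha> - real s) s
       = tail_sum \<alpha> (Suc s) - zeta_real 2 * shifted_harm (real (Suc s))
           - tail_sum_closed_form (\<alpha> - real (Suc s)) (Suc s)"
proof -
  define y where "y = \<alpha> - real s"
  have "y > 1" "\<alpha> = y + real s" "\<alpha> - real (Suc s) = y - 1"
    using assms by (simp_all add: y_def)
  have "tail_sum \<alpha> s - tail_sum (\<alpha> - 1) s =
      (shifted_harm \<alpha> - shifted_harm (real s)) / y ^ 2 - (zeta_real 2 - shifted_harm_pow 2 \<alpha>) / y"
    using assms tail_sum_arg_diff[of \<alpha> s] by (simp add: y_def)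
  moreover have "tail_sum \<alpha> (Suc s) =
      tail_sum (\<alpha> - 1) s - (shifted_harm_pow 2 \<alpha> - zeta_real 2) / (real s + 1)"
    using assms by (intro tail_sum_Suc) simp
  moreover have "shifted_harm (real (Suc s)) = shifted_harm (real s) + 1 / (real s + 1)"
    using shifted_harm_plus_1[of "real s"] by (simp add: add_ac)
  moreover have "tail_sum_closed_form y s - tail_sum_closed_form (y - 1) (Suc s) =
      shifted_harm_pow 2 \<alpha> / (real s + 1) + (shifted_harm \<alpha> - shifted_harm (real s)) / y ^ 2
      + (shifted_harm_pow 2 \<alpha> - zeta_real 2) / y"
    using tail_sum_closed_form_shift[OF \<open>y > 1\<close>, of s] \<open>\<alpha> = y + real s\<close> by simp
  ultimately show ?thesis
    unfolding y_def [symmetric] \<open>\<alpha> - real (Suc s) = y - 1\<close>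
    by (simp add: algebra_simps diff_divide_distrib add_divide_distrib)
qed

lemma tail_sum_invariant:
  assumes "r \<le> k" "real k < \<alpha>"
  shows "tail_sum \<alpha> r - zeta_real 2 * shifted_harm (real r) - tail_sum_closed_form (\<alpha> - real r) r
       = tail_sum \<alpha> k - zeta_real 2 * shifted_harm (real k) - tail_sum_closed_form (\<alpha> - real k) k"
  using assms(1)
proof (induction k rule: dec_induct)
  case (step n)
  with assms(2) show ?case
    using tail_sum_invariant_step[of n \<alpha>] by simp
qed simp

lemma shifted_harm_pow_2_over_product_sums:
  assumes "r < k" "\<alpha> \<ge> 0"
  shows "(\<lambda>i. shifted_harm_pow 2 (real (Suc i) + \<alpha>) / ((real (Suc i) + real r) * (real (Suc i) + real k)))
    sums ((zeta_real 2 * (shifted_harm (real k) - shifted_harm (real r)) + tail_sum \<alpha> r - tail_sum \<alpha> k)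
            / (real k - real r))"
proof -
  define h where "h i = shifted_harm_pow 2 (real (Suc i) + \<alpha>)" for i
  have "(\<lambda>i. (zeta_real 2 * (1 / (real (Suc i) + real r) - 1 / (real (Suc i) + real k))
        + (h i - zeta_real 2) / (real (Suc i) + real r) - (h i - zeta_real 2) / (real (Suc i) + real k))
        / (real k - real r))
    sums ((zeta_real 2 * (shifted_harm (real k) - shifted_harm (real r)) + tail_sum \<alpha> r - tail_sum \<alpha> k)
            / (real k - real r))"
    unfolding h_def using assms
    by (intro sums_divide sums_add sums_diff sums_mult shifted_harm_diff_sums tail_sum_sums) auto
  moreover have "(zeta_real 2 * (1 / (real (Suc i) + real r) - 1 / (real (Suc i) + real k))
        + (h i - zeta_real 2) / (real (Suc i) + real r) - (h i - zeta_real 2) / (real (Suc i) + real k))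
        / (real k - real r)
    = h i / ((real (Suc i) + real r) * (real (Suc i) + real k))" for i
  proof -
    have "real k - real r \<noteq> 0" "real (Suc i) + real r \<noteq> 0" "real (Suc i) + real k \<noteq> 0"
      using assms by auto
    then show ?thesis
      by (simp add: divide_simps) (simp add: algebra_simps)
  qed
  ultimately show ?thesis
    unfolding h_def by simp
qed

theorem theorem2p4:
  fixes r k :: nat and \<alpha> :: real
  assumes "r < k" and "real k < \<alpha>"
  shows "(\<lambda>i. shifted_harm_pow 2 (real (Suc i) + \<alpha>) /
              ((real (Suc i) + real r) * (real (Suc i) + real k)))
         sums
         (1 / (real k - real r) *
           ((real r - \<alpha>) * (\<Sum>j=1..r. shifted_harm_pow 2 (\<alpha> + real j - real r) /
                                   (real j * (\<alpha> + real j - real r)))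
            - (real k - \<alpha>) * (\<Sum>j=1..k. shifted_harm_pow 2 (\<alpha> + real j - real k) /
                                   (real j * (\<alpha> + real j - real k)))
            - (\<Sum>j=1..k-r. shifted_harm (\<alpha> + real j - real k) / (\<alpha> + real j - real k)^2)
            + 2 * shifted_harm_pow 3 (\<alpha> - real r)
            + shifted_harm (\<alpha> - real k) * zeta_real 2
            + 2 * shifted_harm (\<alpha> - real r) * shifted_harm_pow 2 (\<alpha> - real r)
            - 2 * shifted_harm_pow 3 (\<alpha> - real k)
            - shifted_harm (\<alpha> - real r) * zeta_real 2
            - 2 * shifted_harm (\<alpha> - real k) * shifted_harm_pow 2 (\<alpha> - real k)))"
proof -
  have expand: "tail_sum_closed_form (\<alpha> - real s) s =
      2 * shifted_harm_pow 3 (\<alpha> - real s) + 2 * shifted_harm (\<alpha> - real s) * shifted_harm_pow 2 (\<alpha> - real s)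
      - zeta_real 2 * shifted_harm (\<alpha> - real s)
      + (real s - \<alpha>) * (\<Sum>j=1..s. shifted_harm_pow 2 (\<alpha> + real j - real s) / (real j * (\<alpha> + real j - real s)))
      + (\<Sum>j=1..s. shifted_harm (\<alpha> + real j - real s) / (\<alpha> + real j - real s) ^ 2)" for s
    by (simp add: tail_sum_closed_form_def algebra_simps)
  have split: "(\<Sum>j=1..k. shifted_harm (\<alpha> + real j - real k) / (\<alpha> + real j - real k) ^ 2)
      = (\<Sum>j=1..k-r. shifted_harm (\<alpha> + real j - real k) / (\<alpha> + real j - real k) ^ 2)
        + (\<Sum>j=1..r. shifted_harm (\<alpha> + real j - real r) / (\<alpha> + real j - real r) ^ 2)"
  proof -
    have shift: "\<alpha> + real (j + (k - r)) - real k = \<alpha> + real j - real r" for j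
      using assms by (simp add: of_nat_diff)
    from sum_from_1_split[of r k "\<lambda>j. shifted_harm (\<alpha> + real j - real k) / (\<alpha> + real j - real k) ^ 2"]
    show ?thesis
      using assms unfolding shift by simp
  qed
  have "zeta_real 2 * (shifted_harm (real k) - shifted_harm (real r)) + tail_sum \<alpha> r - tail_sum \<alpha> k
      = tail_sum_closed_form (\<alpha> - real r) r - tail_sum_closed_form (\<alpha> - real k) k"
    using tail_sum_invariant[of r k \<alpha>] assms by (simp add: algebra_simps)
  with shifted_harm_pow_2_over_product_sums[of r k \<alpha>] assms
  have "(\<lambda>i. shifted_harm_pow 2 (real (Suc i) + \<alpha>) / ((real (Suc i) + real r) * (real (Suc i) + real k)))
    sums (1 / (real k - real r) * (tail_sum_closed_form (\<alpha> - real r) r - tail_sum_closed_form (\<alpha> - real k) k))"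
    by simp
  then show ?thesis
    unfolding expand split by (simp add: algebra_simps)
qed

end
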